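(* Let $I$ be an ideal of $C(X)_\mathcal{P}$. Then $I$ is a $z_\mathcal{P}$-ideal if and only if $I$ is a $z$-ideal of the ring $C(X)_\mathcal{P}$.
   Context: Let $(X,\tau)$ be a $T_1$ topological space and $\mathcal{P}$ an ideal of closed subsets of $X$ (a nonempty family of closed sets closed under finite unions and under taking closed subsets). For $f\colon X\to\mathbb{R}$, $D_f$ denotes the set of points of $X$ at which $f$ is discontinuous, and $C(X)_\mathcal{P}=\{f\colon X\to\mathbb{R} : \overline{D_f}\in\mathcal{P}\}$, a commutative ring with unity under pointwise operations. For $f\in C(X)_\mathcal{P}$, $Z_\mathcal{P}(f)=\{x\in X: f(x)=0\}$. An ideal $I$ of $C(X)_\mathcal{P}$ is a $z_\mathcal{P}$-ideal if whenever $f\in I$, $g\in C(X)_\mathcal{P}$ and $Z_\mathcal{P}(f)\subseteq Z_\mathcal{P}(g)$, then $g\in I$. For a commutative ring $R$ with unity and $a\in R$, $M(a)$ is the intersection of all maximal ideals of $R$ containing $a$; an ideal $I$ of $R$ is a $z$-ideal if $a\in I$ implies $M(a)\subseteq I$. *)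

theory Defs
  imports "HOL-Analysis.Analysis" "HOL-Algebra.Ideal"
begin

definition cont_at :: "'a topology \<Rightarrow> ('a \<Rightarrow> real) \<Rightarrow> 'a \<Rightarrow> bool" where
  "cont_at X f x \<longleftrightarrow> (\<forall>e>0. \<exists>U. openin X U \<and> x \<in> U \<and> (\<forall>y\<in>U. \<bar>f y - f x\<bar> < e))"

definition disc_set :: "'a topology \<Rightarrow> ('a \<Rightarrow> real) \<Rightarrow> 'a set" where
  "disc_set X f = {x \<in> topspace X. \<not> cont_at X f x}"

definition closed_ideal :: "'a topology \<Rightarrow> 'a set set \<Rightarrow> bool" where
  "closed_ideal X P \<longleftrightarrow> P \<noteq> {} \<and> (\<forall>A\<in>P. closedin X A)
     \<and> (\<forall>A\<in>P. \<forall>B\<in>P. A \<union> B \<in> P)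
     \<and> (\<forall>A\<in>P. \<forall>B. closedin X B \<and> B \<subseteq> A \<longrightarrow> B \<in> P)"

text \<open>Functions X -> R are represented as functions on the type that vanish off topspace X.\<close>
definition CXP_carrier :: "'a topology \<Rightarrow> 'a set set \<Rightarrow> ('a \<Rightarrow> real) set" where
  "CXP_carrier X P = {f. (\<forall>x. x \<notin> topspace X \<longrightarrow> f x = 0) \<and> X closure_of (disc_set X f) \<in> P}"

definition CXP :: "'a topology \<Rightarrow> 'a set set \<Rightarrow> ('a \<Rightarrow> real) ring" where
  "CXP X P = \<lparr> carrier = CXP_carrier X P,
     mult = (\<lambda>f g x. if x \<in> topspace X then f x * g x else 0),
     one = (\<lambda>x. if x \<in> topspace X then 1 else 0),
     zero = (\<lambda>x. 0),
     add = (\<lambda>f g x. if x \<in> topspace X then f x + g x else 0) \<rparr>"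

definition zeroset :: "'a topology \<Rightarrow> ('a \<Rightarrow> real) \<Rightarrow> 'a set" where
  "zeroset X f = {x \<in> topspace X. f x = 0}"

definition zP_ideal :: "'a topology \<Rightarrow> 'a set set \<Rightarrow> ('a \<Rightarrow> real) set \<Rightarrow> bool" where
  "zP_ideal X P I \<longleftrightarrow> ideal I (CXP X P) \<and>
     (\<forall>f\<in>I. \<forall>g\<in>CXP_carrier X P. zeroset X f \<subseteq> zeroset X g \<longrightarrow> g \<in> I)"

definition Mset :: "('b, 'm) ring_scheme \<Rightarrow> 'b \<Rightarrow> 'b set" where
  "Mset R a = carrier R \<inter> \<Inter> {M. maximalideal M R \<and> a \<in> M}"

definition z_ideal :: "('b, 'm) ring_scheme \<Rightarrow> 'b set \<Rightarrow> bool" where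
  "z_ideal R I \<longleftrightarrow> ideal I R \<and> (\<forall>a\<in>I. Mset R a \<subseteq> I)"

end

theory Submission
  imports Defs
begin

text \<open>
  Both notions are governed by the maximal ideals of \<open>C(X)\<^sub>P\<close> through the identity
  \<open>M(f) = {g. Z(f) \<subseteq> Z(g)}\<close>. For \<open>\<supseteq>\<close>: a maximal ideal \<open>M\<close> containing \<open>f\<close> but not \<open>g\<close>
  yields \<open>1 = m + h g\<close> with \<open>m \<in> M\<close>; then \<open>m\<^sup>2 + f\<^sup>2 \<in> M\<close> has no zeros, and its reciprocal is
  discontinuous only where it is, so it lies in \<open>C(X)\<^sub>P\<close> and \<open>M\<close> contains a unit. For \<open>\<subseteq>\<close>: every
  point \<open>x \<in> Z(f)\<close> gives the maximal ideal \<open>{h. h x = 0}\<close> containing \<open>f\<close>.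
\<close>

lemma cont_at_iff_tendsto:
  "x \<in> topspace X \<Longrightarrow> cont_at X f x \<longleftrightarrow> (f \<longlongrightarrow> f x) (nhdsin X x)"
  unfolding cont_at_def tendsto_iff eventually_nhdsin dist_real_def by auto

lemma cont_at_const:
  "x \<in> topspace X \<Longrightarrow> cont_at X (\<lambda>y. if y \<in> topspace X then c else 0) x"
  unfolding cont_at_def by (intro allI impI exI[of _ "topspace X"]) auto

lemma cont_at_inverse:
  assumes x: "x \<in> topspace X" and u: "cont_at X u x" and "u x \<noteq> 0"
  shows "cont_at X (\<lambda>y. if y \<in> topspace X then 1 / u y else 0) x"
proof -
  have "(u \<longlongrightarrow> u x) (nhdsin X x)" using u unfolding cont_at_iff_tendsto[OF x] .
  then have "((\<lambda>y. inverse (u y)) \<longlongrightarrow> inverse (u x)) (nhdsin X x)"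
    using \<open>u x \<noteq> 0\<close> by (rule tendsto_inverse)
  moreover have "eventually (\<lambda>y. inverse (u y) = (if y \<in> topspace X then 1 / u y else 0)) (nhdsin X x)"
    unfolding eventually_nhdsin by (intro disjI2 exI[of _ "topspace X"]) (simp add: x inverse_eq_divide)
  ultimately have "((\<lambda>y. if y \<in> topspace X then 1 / u y else 0) \<longlongrightarrow> inverse (u x)) (nhdsin X x)"
    by (rule tendsto_cong[THEN iffD1, rotated])
  then show ?thesis using x unfolding cont_at_iff_tendsto[OF x] by (simp add: inverse_eq_divide)
qed

lemma closure_of_in_closed_ideal:
  assumes "closed_ideal X P" "A \<in> P" "B \<subseteq> A"
  shows "X closure_of B \<in> P"
proof -
  have "closedin X A" using assms(1,2) unfolding closed_ideal_def by blast
  with assms(3) have "X closure_of B \<subseteq> A" by (rule closure_of_minimal)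
  moreover have "\<forall>A\<in>P. \<forall>B. closedin X B \<and> B \<subseteq> A \<longrightarrow> B \<in> P"
    using assms(1) unfolding closed_ideal_def by blast
  ultimately show ?thesis using assms(2) closedin_closure_of by blast
qed

lemma CXP_simps:
  "carrier (CXP X P) = CXP_carrier X P"
  "x \<in> topspace X \<Longrightarrow> (a \<oplus>\<^bsub>CXP X P\<^esub> b) x = a x + b x"
  "x \<in> topspace X \<Longrightarrow> (a \<otimes>\<^bsub>CXP X P\<^esub> b) x = a x * b x"
  "x \<in> topspace X \<Longrightarrow> \<one>\<^bsub>CXP X P\<^esub> x = 1"
  "\<zero>\<^bsub>CXP X P\<^esub> x = 0"
  by (simp_all add: CXP_def)

lemma CXP_cring:
  assumes "ring (CXP X P)"
  shows "cring (CXP X P)"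
proof -
  interpret ring "CXP X P" by fact
  have "comm_monoid (CXP X P)"
    by (rule monoid_comm_monoidI) (auto simp: CXP_def mult.commute)
  then show ?thesis by (intro cring.intro) (auto intro: assms)
qed

lemma CXP_a_inv:
  assumes "ring (CXP X P)" "a \<in> carrier (CXP X P)" "x \<in> topspace X"
  shows "(\<ominus>\<^bsub>CXP X P\<^esub> a) x = - a x"
proof -
  interpret ring "CXP X P" by fact
  have "(a \<oplus>\<^bsub>CXP X P\<^esub> \<ominus>\<^bsub>CXP X P\<^esub> a) x = 0"
    using r_neg[OF assms(2)] by (simp add: CXP_simps)
  then show ?thesis using assms(3) by (simp add: CXP_simps)
qed

lemma CXP_const_mem:
  assumes "closed_ideal X P"
  shows "(\<lambda>y. if y \<in> topspace X then c else 0) \<in> CXP_carrier X P"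
proof -
  obtain A where "A \<in> P" using assms unfolding closed_ideal_def by auto
  have "disc_set X (\<lambda>y. if y \<in> topspace X then c else 0) = {}"
    unfolding disc_set_def using cont_at_const[of _ X c] by blast
  then show ?thesis
    using closure_of_in_closed_ideal[OF assms \<open>A \<in> P\<close>, of "{}"] unfolding CXP_carrier_def by auto
qed

lemma CXP_inverse_mem:
  assumes cl: "closed_ideal X P" and u: "u \<in> CXP_carrier X P" and nz: "\<forall>x\<in>topspace X. u x \<noteq> 0"
  shows "(\<lambda>y. if y \<in> topspace X then 1 / u y else 0) \<in> CXP_carrier X P"
proof -
  let ?v = "\<lambda>y. if y \<in> topspace X then 1 / u y else 0"
  have "disc_set X ?v \<subseteq> disc_set X u"
  proof
    fix x assume "x \<in> disc_set X ?v"
    then have x: "x \<in> topspace X" and "\<not> cont_at X ?v x" unfolding disc_set_def by auto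
    then have "\<not> cont_at X u x" using cont_at_inverse[of x X u] x nz by blast
    then show "x \<in> disc_set X u" using x unfolding disc_set_def by blast
  qed
  also have "\<dots> \<subseteq> X closure_of disc_set X u"
    by (rule closure_of_subset) (auto simp: disc_set_def)
  finally have "X closure_of disc_set X ?v \<in> P"
    using closure_of_in_closed_ideal[OF cl] u unfolding CXP_carrier_def by blast
  then show ?thesis unfolding CXP_carrier_def by simp
qed

lemma CXP_Units_if_nowhere_zero:
  assumes "closed_ideal X P" "u \<in> CXP_carrier X P" "\<forall>x\<in>topspace X. u x \<noteq> 0"
  shows "u \<in> Units (CXP X P)"
proof -
  let ?v = "\<lambda>y. if y \<in> topspace X then 1 / u y else 0"
  have "?v \<otimes>\<^bsub>CXP X P\<^esub> u = \<one>\<^bsub>CXP X P\<^esub>" "u \<otimes>\<^bsub>CXP X P\<^esub> ?v = \<one>\<^bsub>CXP X P\<^esub>"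
    using assms(3) by (simp_all add: CXP_def fun_eq_iff)
  then show ?thesis
    using assms CXP_inverse_mem unfolding Units_def CXP_simps by blast
qed

definition vanishing_ideal :: "'a topology \<Rightarrow> 'a set set \<Rightarrow> 'a \<Rightarrow> ('a \<Rightarrow> real) set" where
  "vanishing_ideal X P x = {h \<in> CXP_carrier X P. h x = 0}"

lemma ideal_vanishing_ideal:
  assumes r: "ring (CXP X P)" and x: "x \<in> topspace X"
  shows "ideal (vanishing_ideal X P x) (CXP X P)"
proof -
  let ?R = "CXP X P" and ?M = "vanishing_ideal X P x"
  interpret ring ?R by fact
  have "subgroup ?M (add_monoid ?R)"
  proof
    show "?M \<subseteq> carrier (add_monoid ?R)" by (auto simp: vanishing_ideal_def CXP_simps)
    show "\<one>\<^bsub>add_monoid ?R\<^esub> \<in> ?M" using zero_closed by (simp add: vanishing_ideal_def CXP_simps)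
    fix a b assume a: "a \<in> ?M" and b: "b \<in> ?M"
    then show "a \<otimes>\<^bsub>add_monoid ?R\<^esub> b \<in> ?M"
      using a_closed x by (auto simp: vanishing_ideal_def CXP_simps)
    show "inv\<^bsub>add_monoid ?R\<^esub> a \<in> ?M"
      using a a_inv_closed CXP_a_inv[OF r _ x]
      unfolding a_inv_def[symmetric] by (auto simp: vanishing_ideal_def CXP_simps)
  qed
  then show ?thesis
    using r m_closed x by (intro idealI) (auto simp: vanishing_ideal_def CXP_simps)
qed

lemma maximalideal_vanishing_ideal:
  assumes cl: "closed_ideal X P" and r: "ring (CXP X P)" and x: "x \<in> topspace X"
  shows "maximalideal (vanishing_ideal X P x) (CXP X P)"
proof (rule maximalidealI[OF ideal_vanishing_ideal[OF r x]])
  let ?R = "CXP X P" and ?M = "vanishing_ideal X P x"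
  interpret ring ?R by fact
  have "\<one>\<^bsub>?R\<^esub> \<notin> ?M" using x by (simp add: vanishing_ideal_def CXP_simps)
  then show "carrier ?R \<noteq> ?M" using one_closed by metis
  fix J assume J: "ideal J ?R" "?M \<subseteq> J" "J \<subseteq> carrier ?R"
  show "J = ?M \<or> J = carrier ?R"
  proof (cases "J \<subseteq> ?M")
    case True
    then show ?thesis using J(2) by (simp add: subset_antisym)
  next
    case False
    then obtain h where h: "h \<in> J" "h x \<noteq> 0"
      using J(3) by (auto simp: vanishing_ideal_def CXP_simps)
    have hc: "h \<in> carrier ?R" using h(1) J(3) by blast
    define c where "c = (\<lambda>y. if y \<in> topspace X then 1 / h x else 0)"
    have c: "c \<in> carrier ?R" unfolding c_def CXP_simps by (rule CXP_const_mem[OF cl])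
    define k where "k = \<one>\<^bsub>?R\<^esub> \<ominus>\<^bsub>?R\<^esub> c \<otimes>\<^bsub>?R\<^esub> h"
    have ch: "c \<otimes>\<^bsub>?R\<^esub> h \<in> J" using h(1) c by (rule ideal.I_l_closed[OF J(1)])
    have "k x = 1 - c x * h x"
      using x by (simp add: k_def minus_eq CXP_simps CXP_a_inv[OF r m_closed[OF c hc] x])
    then have "k x = 0" using x h(2) by (simp add: c_def)
    moreover have "k \<in> carrier ?R"
      unfolding k_def by (rule minus_closed[OF one_closed m_closed[OF c hc]])
    ultimately have "k \<in> J" using J(2) by (auto simp: vanishing_ideal_def CXP_simps)
    then have "k \<oplus>\<^bsub>?R\<^esub> c \<otimes>\<^bsub>?R\<^esub> h \<in> J"
      using ch by (rule additive_subgroup.a_closed[OF ideal.axioms(1)[OF J(1)]])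
    moreover have "k \<oplus>\<^bsub>?R\<^esub> c \<otimes>\<^bsub>?R\<^esub> h = \<one>\<^bsub>?R\<^esub>"
      using m_closed[OF c hc] by (simp add: k_def minus_eq a_assoc l_neg)
    ultimately have "\<one>\<^bsub>?R\<^esub> \<in> J" by simp
    then show ?thesis using ideal.one_imp_carrier[OF J(1)] by blast
  qed
qed

lemma (in cring) maximalideal_one_decomp:
  assumes "maximalideal M R" "g \<in> carrier R" "g \<notin> M"
  obtains m h where "m \<in> M" "h \<in> carrier R" "\<one> = m \<oplus> h \<otimes> g"
proof -
  interpret M: maximalideal M R by fact
  let ?J = "M <+>\<^bsub>R\<^esub> PIdl g"
  have J: "ideal ?J R" by (intro add_ideals M.is_ideal cgenideal_ideal assms(2))
  have "M \<subseteq> ?J"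
  proof
    fix m assume "m \<in> M"
    have "\<zero> \<in> PIdl g"
      by (rule additive_subgroup.zero_closed[OF ideal.axioms(1)[OF cgenideal_ideal[OF assms(2)]]])
    then show "m \<in> ?J" unfolding set_add_def'
      by (rule UN_I[OF \<open>m \<in> M\<close>, OF UN_I]) (simp add: M.Icarr[OF \<open>m \<in> M\<close>])
  qed
  moreover have "g \<in> ?J" unfolding set_add_def'
    by (rule UN_I[OF M.zero_closed, OF UN_I[OF cgenideal_self[OF assms(2)]]]) (simp add: assms(2))
  ultimately have "?J = carrier R"
    using M.I_maximal[OF J] ideal.Icarr[OF J] assms(3) by blast
  then obtain m k where "m \<in> M" "k \<in> PIdl g" "\<one> = m \<oplus> k"
    using one_closed unfolding set_add_def' by blast
  then show ?thesis using that unfolding cgenideal_def by blast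
qed

lemma maximalideal_zeroset_closed:
  assumes cl: "closed_ideal X P" and r: "ring (CXP X P)"
    and M: "maximalideal M (CXP X P)" and "f \<in> M"
    and g: "g \<in> CXP_carrier X P" and Z: "zeroset X f \<subseteq> zeroset X g"
  shows "g \<in> M"
proof (rule ccontr)
  let ?R = "CXP X P"
  interpret cring ?R using CXP_cring[OF r] .
  interpret M: maximalideal M ?R by fact
  assume "g \<notin> M"
  then obtain m h where m: "m \<in> M" and h: "h \<in> carrier ?R"
    and one: "\<one>\<^bsub>?R\<^esub> = m \<oplus>\<^bsub>?R\<^esub> h \<otimes>\<^bsub>?R\<^esub> g"
    using maximalideal_one_decomp[OF M] g by (auto simp: CXP_simps)
  define u where "u = m \<otimes>\<^bsub>?R\<^esub> m \<oplus>\<^bsub>?R\<^esub> f \<otimes>\<^bsub>?R\<^esub> f"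
  have "u \<in> M" unfolding u_def using m \<open>f \<in> M\<close> M.Icarr by (intro M.a_closed M.I_r_closed)
  have "u x \<noteq> 0" if x: "x \<in> topspace X" for x
  proof
    assume "u x = 0"
    then have "m x = 0" "f x = 0" using x by (simp_all add: u_def CXP_simps)
    moreover have "m x + h x * g x = 1" using arg_cong[OF one, of "\<lambda>k. k x"] x by (simp add: CXP_simps)
    ultimately show False using Z x by (auto simp: zeroset_def)
  qed
  then have u: "u \<in> Units ?R"
    using cl \<open>u \<in> M\<close> M.Icarr by (intro CXP_Units_if_nowhere_zero) (auto simp: CXP_simps)
  then have "\<one>\<^bsub>?R\<^esub> \<in> M"
    using M.I_l_closed[OF \<open>u \<in> M\<close> Units_inv_closed[OF u]] Units_l_inv[OF u] by simp
  then show False using M.one_imp_carrier M.I_notcarr by blast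
qed

lemma Mset_CXP_eq:
  assumes cl: "closed_ideal X P" and r: "ring (CXP X P)" and f: "f \<in> CXP_carrier X P"
  shows "Mset (CXP X P) f = {g \<in> CXP_carrier X P. zeroset X f \<subseteq> zeroset X g}"
proof (intro equalityI subsetI)
  fix g assume g: "g \<in> Mset (CXP X P) f"
  have "g x = 0" if "x \<in> zeroset X f" for x
  proof -
    have "x \<in> topspace X" "f \<in> vanishing_ideal X P x"
      using that f by (auto simp: zeroset_def vanishing_ideal_def)
    then show ?thesis
      using g maximalideal_vanishing_ideal[OF cl r] by (auto simp: Mset_def vanishing_ideal_def)
  qed
  then show "g \<in> {g \<in> CXP_carrier X P. zeroset X f \<subseteq> zeroset X g}"
    using g by (auto simp: Mset_def zeroset_def CXP_simps)
next
  fix g assume "g \<in> {g \<in> CXP_carrier X P. zeroset X f \<subseteq> zeroset X g}"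
  then show "g \<in> Mset (CXP X P) f"
    using maximalideal_zeroset_closed[OF cl r] by (auto simp: Mset_def CXP_simps)
qed

theorem theorem2p3:
  fixes X :: "'a topology" and P :: "'a set set" and I :: "('a \<Rightarrow> real) set"
  assumes "t1_space X"
    and "closed_ideal X P"
    and "ideal I (CXP X P)"
  shows "zP_ideal X P I \<longleftrightarrow> z_ideal (CXP X P) I"
proof -
  have "ring (CXP X P)" using assms(3) by (rule ideal.axioms(2))
  moreover have "I \<subseteq> CXP_carrier X P" using ideal.Icarr[OF assms(3)] by (auto simp: CXP_simps)
  ultimately have "Mset (CXP X P) f = {g \<in> CXP_carrier X P. zeroset X f \<subseteq> zeroset X g}"
    if "f \<in> I" for f
    using Mset_CXP_eq[OF assms(2)] that by blast
  then show ?thesis unfolding zP_ideal_def z_ideal_def using assms(3) by auto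
qed

end
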